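(* Let $\mathcal H$ be a Hilbert space of dimension $d$, let $H(t_i)=\sum_l E^i_l\Pi^i_l$ and $H(t_f)=\sum_k E^f_k\Pi^f_k$ be Hermitian operators with spectral projectors $\Pi^i_l,\Pi^f_k$, let $\Phi$ be a CPTP map on $\mathcal H$ and $\beta>0$. Let $\gamma_{\beta,i}=e^{-\beta H(t_i)}/\mathcal Z_{\beta,i}$, $\gamma_{\beta,f}=e^{-\beta H(t_f)}/\mathcal Z_{\beta,f}$, $\Delta F=-\beta^{-1}\ln(\mathcal Z_{\beta,f}/\mathcal Z_{\beta,i})$. Let $\rho_i$ be a density operator decomposed as $$\rho_i=(1-a)\gamma_{\beta,i}+a(1-c)\tau_d+ac\,\tau_c,$$ where $a$ is the weight of athermality of $\rho_i$ with respect to $\gamma_{\beta,i}$ with minimal athermal state $\tau$, and $\tau=(1-c)\tau_d+c\tau_c$ with $c$ the weight of coherence of $\tau$ with respect to the eigenbasis of $H(t_i)$, $\tau_d$ a density operator diagonal in that basis and $\tau_c$ a density operator. Then the EPM average satisfies $$\big\langle e^{-\beta(\Delta E-\Delta F)}\big\rangle=\Big\{(1-a)d+a(1-c)\mathrm{Tr}(\gamma_{\beta,i}^{-1}\tau_d)+ac\,\mathrm{Tr}(\gamma_{\beta,i}^{-1}\tau_c)\Big\}\Big\{(1-a)\mathrm{Tr}(\gamma_{\beta,f}\Phi[\gamma_{\beta,i}])+a(1-c)\mathrm{Tr}(\gamma_{\beta,f}\Phi[\tau_d])+ac\,\mathrm{Tr}(\gamma_{\beta,f}\Phi[\tau_c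])\Big\}.$$
   Context: EPM statistics: for initial state $\rho_i$, $p^{l,k}=\mathrm{Tr}(\rho_i\Pi^i_l)\mathrm{Tr}(\Phi[\rho_i]\Pi^f_k)$, $\Delta E_{l,k}=E^f_k-E^i_l$, and $\langle g(\Delta E)\rangle=\sum_{l,k}p^{l,k}g(\Delta E_{l,k})$. Weight of athermality: $A_w(\rho)=\min_{\tau\in\mathscr D(\mathcal H)}\{a\ge0:\rho=(1-a)\gamma_{\beta,i}+a\tau\}$ ($\mathscr D(\mathcal H)$ = density operators); $\tau$ attaining it is the minimal athermal state. Weight of coherence with respect to a fixed basis: $C_w(\tau)=\min\{c\ge0:\tau=(1-c)\sigma+c\tau',\ \sigma \text{ diagonal in the basis},\ \tau'\in\mathscr D(\mathcal H)\}$, with $\tau_d=\sigma$, $\tau_c=\tau'$ an optimal pair. *)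

theory Defs
  imports "Jordan_Normal_Form.Schur_Decomposition" "Jordan_Normal_Form.Gauss_Jordan_Elimination"
begin

definition tr :: "complex mat \<Rightarrow> complex" where
  "tr A = (\<Sum>i<dim_row A. A $$ (i,i))"

definition msum :: "nat \<Rightarrow> ('i \<Rightarrow> complex mat) \<Rightarrow> 'i set \<Rightarrow> complex mat" where
  "msum d f L = mat d d (\<lambda>(r,s). \<Sum>l\<in>L. f l $$ (r,s))"

definition rsmult :: "real \<Rightarrow> complex mat \<Rightarrow> complex mat" (infixr "\<cdot>\<^sub>r" 70) where
  "a \<cdot>\<^sub>r A = complex_of_real a \<cdot>\<^sub>m A"

definition hermitian :: "nat \<Rightarrow> complex mat \<Rightarrow> bool" where
  "hermitian d A \<longleftrightarrow> A \<in> carrier_mat d d \<and> mat_adjoint A = A"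

definition psd :: "nat \<Rightarrow> complex mat \<Rightarrow> bool" where
  "psd d A \<longleftrightarrow> A \<in> carrier_mat d d \<and>
     (\<forall>v \<in> carrier_vec d. let q = (\<Sum>i<d. cnj (v $ i) * (A *\<^sub>v v) $ i) in Im q = 0 \<and> Re q \<ge> 0)"

definition density :: "nat \<Rightarrow> complex mat \<Rightarrow> bool" where
  "density d \<rho> \<longleftrightarrow> psd d \<rho> \<and> tr \<rho> = 1"

definition unitary :: "nat \<Rightarrow> complex mat \<Rightarrow> bool" where
  "unitary d U \<longleftrightarrow> U \<in> carrier_mat d d \<and> mat_adjoint U * U = 1\<^sub>m d \<and> U * mat_adjoint U = 1\<^sub>m d"

definition spectral_decomp :: "nat \<Rightarrow> complex mat \<Rightarrow> nat \<Rightarrow> (nat \<Rightarrow> real) \<Rightarrow> (nat \<Rightarrow> complex mat) \<Rightarrow> bool" where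
  "spectral_decomp d H m E P \<longleftrightarrow>
     hermitian d H \<and> inj_on E {..<m} \<and>
     (\<forall>l<m. hermitian d (P l) \<and> P l * P l = P l \<and> P l \<noteq> 0\<^sub>m d d) \<and>
     (\<forall>l<m. \<forall>k<m. l \<noteq> k \<longrightarrow> P l * P k = 0\<^sub>m d d) \<and>
     msum d P {..<m} = 1\<^sub>m d \<and>
     H = msum d (\<lambda>l. E l \<cdot>\<^sub>r P l) {..<m}"

definition mat_fun :: "nat \<Rightarrow> nat \<Rightarrow> (nat \<Rightarrow> real) \<Rightarrow> (nat \<Rightarrow> complex mat) \<Rightarrow> (real \<Rightarrow> real) \<Rightarrow> complex mat" where
  "mat_fun d m E P f = msum d (\<lambda>l. f (E l) \<cdot>\<^sub>r P l) {..<m}"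

definition part_fn :: "nat \<Rightarrow> nat \<Rightarrow> (nat \<Rightarrow> real) \<Rightarrow> (nat \<Rightarrow> complex mat) \<Rightarrow> real \<Rightarrow> real" where
  "part_fn d m E P \<beta> = Re (tr (mat_fun d m E P (\<lambda>x. exp (- \<beta> * x))))"

definition gibbs :: "nat \<Rightarrow> nat \<Rightarrow> (nat \<Rightarrow> real) \<Rightarrow> (nat \<Rightarrow> complex mat) \<Rightarrow> real \<Rightarrow> complex mat" where
  "gibbs d m E P \<beta> = (1 / part_fn d m E P \<beta>) \<cdot>\<^sub>r mat_fun d m E P (\<lambda>x. exp (- \<beta> * x))"

definition mat_inv :: "complex mat \<Rightarrow> complex mat" where
  "mat_inv A = the (mat_inverse A)"

(* (id_n \<otimes> Phi) applied to an (n*d) x (n*d) matrix viewed as n x n blocks of size d x d *)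
definition ampliate :: "nat \<Rightarrow> nat \<Rightarrow> (complex mat \<Rightarrow> complex mat) \<Rightarrow> complex mat \<Rightarrow> complex mat" where
  "ampliate n d \<Phi> X = mat (n*d) (n*d) (\<lambda>(p,q).
      \<Phi> (mat d d (\<lambda>(r,s). X $$ ((p div d) * d + r, (q div d) * d + s))) $$ (p mod d, q mod d))"

definition cptp :: "nat \<Rightarrow> (complex mat \<Rightarrow> complex mat) \<Rightarrow> bool" where
  "cptp d \<Phi> \<longleftrightarrow>
     (\<forall>A \<in> carrier_mat d d. \<Phi> A \<in> carrier_mat d d) \<and>
     (\<forall>A \<in> carrier_mat d d. \<forall>B \<in> carrier_mat d d. \<Phi> (A + B) = \<Phi> A + \<Phi> B) \<and>
     (\<forall>A \<in> carrier_mat d d. \<forall>c. \<Phi> (c \<cdot>\<^sub>m A) = c \<cdot>\<^sub>m \<Phi> A) \<and>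
     (\<forall>A \<in> carrier_mat d d. tr (\<Phi> A) = tr A) \<and>
     (\<forall>n X. psd (n*d) X \<longrightarrow> psd (n*d) (ampliate n d \<Phi> X))"

(* diagonal in the orthonormal basis given by the columns of U *)
definition diag_in :: "complex mat \<Rightarrow> complex mat \<Rightarrow> bool" where
  "diag_in U A \<longleftrightarrow> diagonal_mat (mat_adjoint U * A * U)"

definition athermality_weight :: "nat \<Rightarrow> complex mat \<Rightarrow> complex mat \<Rightarrow> real" where
  "athermality_weight d \<gamma> \<rho> =
     Inf {a. a \<ge> 0 \<and> (\<exists>\<tau>. density d \<tau> \<and> \<rho> = (1 - a) \<cdot>\<^sub>r \<gamma> + a \<cdot>\<^sub>r \<tau>)}"

definition coherence_weight :: "nat \<Rightarrow> complex mat \<Rightarrow> complex mat \<Rightarrow> real" where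
  "coherence_weight d U \<tau> =
     Inf {c. c \<ge> 0 \<and> (\<exists>\<sigma> \<tau>'. density d \<sigma> \<and> diag_in U \<sigma> \<and> density d \<tau>' \<and>
                         \<tau> = (1 - c) \<cdot>\<^sub>r \<sigma> + c \<cdot>\<^sub>r \<tau>')}"

definition epm_avg :: "nat \<Rightarrow> (nat \<Rightarrow> real) \<Rightarrow> (nat \<Rightarrow> complex mat) \<Rightarrow>
    nat \<Rightarrow> (nat \<Rightarrow> real) \<Rightarrow> (nat \<Rightarrow> complex mat) \<Rightarrow> (complex mat \<Rightarrow> complex mat) \<Rightarrow>
    complex mat \<Rightarrow> (real \<Rightarrow> complex) \<Rightarrow> complex" where
  "epm_avg mi Ei Qi mf Ef Qf \<Phi> \<rho> g =
     (\<Sum>l<mi. \<Sum>k<mf. tr (\<rho> * Qi l) * tr (\<Phi> \<rho> * Qf k) * g (Ef k - Ei l))"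

end

(*
  Since exp (-beta (E^f_k - E^i_l - Delta F)) = Z_i exp (beta E^i_l) * exp (-beta E^f_k) / Z_f,
  the double sum defining the EPM average splits into the product
  Tr (gamma_i^-1 rho) * Tr (gamma_f Phi[rho]), where both gamma_i^-1 = Z_i exp (beta H(t_i)) and
  gamma_f are obtained from the functional calculus of the spectral decompositions.  Both factors
  are linear in rho (the second because Phi is), so inserting
  rho = (1 - a) gamma_i + a (1 - c) tau_d + a c tau_c and Tr (gamma_i^-1 gamma_i) = d gives the
  claim.
*)

theory Submission
  imports Defs
begin

lemma msum_carrier [simp]: "msum d F L \<in> carrier_mat d d"
  by (simp add: msum_def)

lemma msum_index [simp]: "i < d \<Longrightarrow> j < d \<Longrightarrow> msum d F L $$ (i, j) = (\<Sum>l\<in>L. F l $$ (i, j))"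
  by (simp add: msum_def)

lemma msum_dim [simp]: "dim_row (msum d F L) = d" "dim_col (msum d F L) = d"
  by (simp_all add: msum_def)

lemma msum_cong: "(\<And>l. l \<in> L \<Longrightarrow> F l = G l) \<Longrightarrow> msum d F L = msum d G L"
  by (simp add: msum_def)

lemma msum_delta:
  assumes "finite L" "l \<in> L" "F l \<in> carrier_mat d d" "\<And>k. k \<in> L \<Longrightarrow> k \<noteq> l \<Longrightarrow> F k = 0\<^sub>m d d"
  shows "msum d F L = F l"
proof (rule eq_matI)
  fix i j assume "i < dim_row (F l)" "j < dim_col (F l)"
  then show "msum d F L $$ (i, j) = F l $$ (i, j)"
    using assms by (simp add: sum.remove)
qed (use assms in auto)

lemma index_mult_mat_sum:
  assumes "A \<in> carrier_mat d n" "B \<in> carrier_mat n e" "i < d" "j < e"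
  shows "(A * B) $$ (i, j) = (\<Sum>k<n. A $$ (i, k) * B $$ (k, j))"
  using assms by (simp add: scalar_prod_def atLeast0LessThan)

lemma mult_msum_left:
  assumes "X \<in> carrier_mat d d" "\<And>l. l \<in> L \<Longrightarrow> F l \<in> carrier_mat d d"
  shows "msum d F L * X = msum d (\<lambda>l. F l * X) L"
proof (rule eq_matI)
  fix i j assume "i < dim_row (msum d (\<lambda>l. F l * X) L)" "j < dim_col (msum d (\<lambda>l. F l * X) L)"
  then have ij: "i < d" "j < d" by auto
  have "(msum d F L * X) $$ (i, j) = (\<Sum>k<d. \<Sum>l\<in>L. F l $$ (i, k) * X $$ (k, j))"
    using assms ij by (simp add: scalar_prod_def atLeast0LessThan sum_distrib_right)
  also have "\<dots> = (\<Sum>l\<in>L. (F l * X) $$ (i, j))"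
    using ij by (subst sum.swap) (simp add: index_mult_mat_sum[OF assms(2) assms(1)])
  finally show "(msum d F L * X) $$ (i, j) = msum d (\<lambda>l. F l * X) L $$ (i, j)"
    using ij by simp
qed (use assms in auto)

lemma mult_msum_right:
  assumes "X \<in> carrier_mat d d" "\<And>l. l \<in> L \<Longrightarrow> F l \<in> carrier_mat d d"
  shows "X * msum d F L = msum d (\<lambda>l. X * F l) L"
proof (rule eq_matI)
  fix i j assume "i < dim_row (msum d (\<lambda>l. X * F l) L)" "j < dim_col (msum d (\<lambda>l. X * F l) L)"
  then have ij: "i < d" "j < d" by auto
  have "(X * msum d F L) $$ (i, j) = (\<Sum>k<d. \<Sum>l\<in>L. X $$ (i, k) * F l $$ (k, j))"
    using assms ij by (simp add: scalar_prod_def atLeast0LessThan sum_distrib_left)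
  also have "\<dots> = (\<Sum>l\<in>L. (X * F l) $$ (i, j))"
    using ij by (subst sum.swap) (simp add: index_mult_mat_sum[OF assms(1) assms(2)])
  finally show "(X * msum d F L) $$ (i, j) = msum d (\<lambda>l. X * F l) L $$ (i, j)"
    using ij by simp
qed (use assms in auto)

lemma rsmult_carrier [simp]: "A \<in> carrier_mat n n \<Longrightarrow> a \<cdot>\<^sub>r A \<in> carrier_mat n n"
  by (simp add: rsmult_def)

lemma rsmult_index [simp]:
  "i < dim_row A \<Longrightarrow> j < dim_col A \<Longrightarrow> (a \<cdot>\<^sub>r A) $$ (i, j) = complex_of_real a * A $$ (i, j)"
  by (simp add: rsmult_def)

lemma rsmult_dim [simp]: "dim_row (a \<cdot>\<^sub>r A) = dim_row A" "dim_col (a \<cdot>\<^sub>r A) = dim_col A"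
  by (simp_all add: rsmult_def)

lemma rsmult_one [simp]: "1 \<cdot>\<^sub>r A = A"
  by (intro eq_matI) auto

lemma rsmult_rsmult [simp]: "a \<cdot>\<^sub>r b \<cdot>\<^sub>r A = (a * b) \<cdot>\<^sub>r A"
  by (intro eq_matI) auto

lemma mult_rsmult_left: "dim_col A = dim_row B \<Longrightarrow> (a \<cdot>\<^sub>r A) * B = a \<cdot>\<^sub>r (A * B)"
  by (intro eq_matI) (auto simp: rsmult_def scalar_prod_def sum_distrib_left ac_simps)

lemma mult_rsmult_right: "A * (a \<cdot>\<^sub>r B) = a \<cdot>\<^sub>r (A * B)"
  by (intro eq_matI) (auto simp: rsmult_def scalar_prod_def sum_distrib_left ac_simps)

lemma tr_mult:
  assumes "A \<in> carrier_mat d n" "B \<in> carrier_mat n d"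
  shows "tr (A * B) = (\<Sum>i<d. \<Sum>k<n. A $$ (i, k) * B $$ (k, i))"
proof -
  have "tr (A * B) = (\<Sum>i<d. (A * B) $$ (i, i))"
    using assms by (simp add: tr_def)
  also have "\<dots> = (\<Sum>i<d. \<Sum>k<n. A $$ (i, k) * B $$ (k, i))"
    by (intro sum.cong refl index_mult_mat_sum[OF assms]) auto
  finally show ?thesis .
qed

lemma tr_mult_commute:
  assumes "A \<in> carrier_mat d n" "B \<in> carrier_mat n d"
  shows "tr (A * B) = tr (B * A)"
  unfolding tr_mult[OF assms] tr_mult[OF assms(2,1)]
  by (subst sum.swap) (simp add: mult.commute)

lemma tr_one_mat [simp]: "tr (1\<^sub>m d) = of_nat d"
  by (simp add: tr_def)

lemma tr_add: "A \<in> carrier_mat n n \<Longrightarrow> B \<in> carrier_mat n n \<Longrightarrow> tr (A + B) = tr A + tr B"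
  by (simp add: tr_def sum.distrib)

lemma tr_rsmult: "A \<in> carrier_mat n n \<Longrightarrow> tr (a \<cdot>\<^sub>r A) = complex_of_real a * tr A"
  by (simp add: tr_def sum_distrib_left)

lemma tr_mult_add_right:
  assumes "X \<in> carrier_mat n n" "A \<in> carrier_mat n n" "B \<in> carrier_mat n n"
  shows "tr (X * (A + B)) = tr (X * A) + tr (X * B)"
  using assms by (simp add: mult_add_distrib_mat tr_add[of _ n])

lemma tr_mult_rsmult_right:
  assumes "X \<in> carrier_mat n n" "A \<in> carrier_mat n n"
  shows "tr (X * (a \<cdot>\<^sub>r A)) = complex_of_real a * tr (X * A)"
  using assms by (simp add: mult_rsmult_right tr_rsmult[of _ n])

lemma tr_msum:
  assumes "\<And>l. l \<in> L \<Longrightarrow> F l \<in> carrier_mat d d"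
  shows "tr (msum d F L) = (\<Sum>l\<in>L. tr (F l))"
  using assms by (simp add: tr_def) (subst sum.swap, auto intro!: sum.cong)

lemma density_carrier: "density d \<rho> \<Longrightarrow> \<rho> \<in> carrier_mat d d"
  by (simp add: density_def psd_def)

lemma cptp_carrier: "cptp d \<Phi> \<Longrightarrow> A \<in> carrier_mat d d \<Longrightarrow> \<Phi> A \<in> carrier_mat d d"
  by (simp add: cptp_def)

lemma cptp_add:
  "cptp d \<Phi> \<Longrightarrow> A \<in> carrier_mat d d \<Longrightarrow> B \<in> carrier_mat d d \<Longrightarrow> \<Phi> (A + B) = \<Phi> A + \<Phi> B"
  by (simp add: cptp_def)

lemma cptp_rsmult: "cptp d \<Phi> \<Longrightarrow> A \<in> carrier_mat d d \<Longrightarrow> \<Phi> (a \<cdot>\<^sub>r A) = a \<cdot>\<^sub>r \<Phi> A"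
  by (simp add: cptp_def rsmult_def)

lemma spectral_decompD:
  assumes "spectral_decomp d H m E P"
  shows "\<And>l. l < m \<Longrightarrow> P l \<in> carrier_mat d d"
    and "\<And>l. l < m \<Longrightarrow> hermitian d (P l)"
    and "\<And>l. l < m \<Longrightarrow> P l * P l = P l"
    and "\<And>l. l < m \<Longrightarrow> P l \<noteq> 0\<^sub>m d d"
    and "\<And>l k. l < m \<Longrightarrow> k < m \<Longrightarrow> l \<noteq> k \<Longrightarrow> P l * P k = 0\<^sub>m d d"
    and "msum d P {..<m} = 1\<^sub>m d"
  using assms unfolding spectral_decomp_def hermitian_def by auto

lemma mat_fun_carrier [simp]: "mat_fun d m E P f \<in> carrier_mat d d"
  by (simp add: mat_fun_def)

lemma mat_fun_dim [simp]: "dim_row (mat_fun d m E P f) = d" "dim_col (mat_fun d m E P f) = d"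
  by (simp_all add: mat_fun_def)

lemma tr_mult_mat_fun:
  assumes "spectral_decomp d H m E P" "X \<in> carrier_mat d d"
  shows "tr (X * mat_fun d m E P f) = (\<Sum>l<m. complex_of_real (f (E l)) * tr (X * P l))"
proof -
  note P = spectral_decompD(1)[OF assms(1)]
  have "tr (X * mat_fun d m E P f) = (\<Sum>l<m. tr (X * (f (E l) \<cdot>\<^sub>r P l)))"
    unfolding mat_fun_def using assms(2) P
    by (subst mult_msum_right) (auto intro: tr_msum)
  also have "\<dots> = (\<Sum>l<m. complex_of_real (f (E l)) * tr (X * P l))"
    using assms(2) by (intro sum.cong refl) (simp add: mult_rsmult_right tr_rsmult[of _ d] P)
  finally show ?thesis .
qed

lemma projector_mult_mat_fun:
  assumes "spectral_decomp d H m E P" "l < m"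
  shows "P l * mat_fun d m E P f = f (E l) \<cdot>\<^sub>r P l"
proof -
  note P = spectral_decompD[OF assms(1)]
  have "P l * mat_fun d m E P f = msum d (\<lambda>k. f (E k) \<cdot>\<^sub>r (P l * P k)) {..<m}"
    unfolding mat_fun_def using assms(2)
    by (subst mult_msum_right) (auto intro!: msum_cong simp: mult_rsmult_right P(1))
  also have "\<dots> = f (E l) \<cdot>\<^sub>r (P l * P l)"
    using assms(2) P(1,5) by (intro msum_delta) (auto simp: P(3))
  finally show ?thesis
    using P(3)[OF assms(2)] by simp
qed

lemma mat_fun_mult:
  assumes "spectral_decomp d H m E P"
  shows "mat_fun d m E P f * mat_fun d m E P g = mat_fun d m E P (\<lambda>x. f x * g x)"
proof -
  note P = spectral_decompD(1)[OF assms]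
  have "mat_fun d m E P f * mat_fun d m E P g
      = msum d (\<lambda>l. f (E l) \<cdot>\<^sub>r (P l * mat_fun d m E P g)) {..<m}"
    unfolding mat_fun_def[of d m E P f]
    by (subst mult_msum_left) (auto intro!: msum_cong simp: mult_rsmult_left P carrier_matD[OF P])
  also have "\<dots> = mat_fun d m E P (\<lambda>x. f x * g x)"
    unfolding mat_fun_def[of d m E P "\<lambda>x. f x * g x"]
    by (intro msum_cong) (simp add: projector_mult_mat_fun[OF assms])
  finally show ?thesis .
qed

lemma mat_fun_eq_one:
  assumes "spectral_decomp d H m E P" "\<And>l. l < m \<Longrightarrow> f (E l) = 1"
  shows "mat_fun d m E P f = 1\<^sub>m d"
proof -
  have "mat_fun d m E P f = msum d P {..<m}"
    unfolding mat_fun_def using assms by (intro msum_cong) simp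
  then show ?thesis
    using spectral_decompD(6)[OF assms(1)] by simp
qed

lemma mat_inv_eqI:
  assumes "A \<in> carrier_mat n n" "B \<in> carrier_mat n n" "A * B = 1\<^sub>m n" "B * A = 1\<^sub>m n"
  shows "mat_inv A = B"
proof -
  have "A \<in> Units (ring_mat TYPE(complex) n undefined)"
    using assms unfolding Units_def by (auto simp: ring_mat_simps)
  then obtain B' where B': "mat_inverse A = Some B'"
    using mat_inverse(1)[OF assms(1), of undefined] by (cases "mat_inverse A") auto
  then have B'_carrier: "B' \<in> carrier_mat n n" and "B' * A = 1\<^sub>m n"
    using mat_inverse(2)[OF assms(1)] by auto
  then have "B' = B' * (A * B)"
    by (simp add: assms(3))
  also have "\<dots> = B"
    using assms(1,2) B'_carrier \<open>B' * A = 1\<^sub>m n\<close> by (simp flip: assoc_mult_mat)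
  finally show ?thesis
    using B' by (simp add: mat_inv_def)
qed

lemma mat_inv_mat_fun:
  assumes "spectral_decomp d H m E P" "\<And>l. l < m \<Longrightarrow> f (E l) * g (E l) = 1"
  shows "mat_inv (mat_fun d m E P f) = mat_fun d m E P g"
  using assms
  by (intro mat_inv_eqI[of _ d]) (auto simp: mat_fun_mult mult.commute intro!: mat_fun_eq_one)

lemma tr_hermitian_square:
  assumes "hermitian d A"
  shows "tr (A * A) = complex_of_real (\<Sum>i<d. \<Sum>k<d. (cmod (A $$ (i, k)))\<^sup>2)"
proof -
  have A: "A \<in> carrier_mat d d" and "mat_adjoint A = A"
    using assms by (auto simp: hermitian_def)
  have entry_swap: "A $$ (k, i) = cnj (A $$ (i, k))" if "i < d" "k < d" for i k
  proof -
    have "A $$ (k, i) = mat_adjoint A $$ (k, i)"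
      using \<open>mat_adjoint A = A\<close> by simp
    also have "\<dots> = cnj (A $$ (i, k))"
      using A that by (simp add: mat_adjoint_def mat_of_rows_index)
    finally show ?thesis .
  qed
  have "tr (A * A) = (\<Sum>i<d. \<Sum>k<d. A $$ (i, k) * cnj (A $$ (i, k)))"
    unfolding tr_mult[OF A A] by (intro sum.cong refl) (metis entry_swap lessThan_iff)
  then show ?thesis
    by (simp flip: complex_norm_square)
qed

lemma tr_projector_pos:
  assumes "hermitian d P" "P * P = P" "P \<noteq> 0\<^sub>m d d"
  shows "0 < Re (tr P)"
proof -
  have P: "P \<in> carrier_mat d d"
    using assms(1) by (simp add: hermitian_def)
  obtain i0 k0 where "i0 < d" "k0 < d" "P $$ (i0, k0) \<noteq> 0"
    using assms(3) P by (metis carrier_matD eq_matI index_zero_mat(1,2,3))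
  then have "0 < (cmod (P $$ (i0, k0)))\<^sup>2"
    by simp
  also have "\<dots> \<le> (\<Sum>k<d. (cmod (P $$ (i0, k)))\<^sup>2)"
    using \<open>k0 < d\<close> by (intro member_le_sum) auto
  also have "\<dots> \<le> (\<Sum>i<d. \<Sum>k<d. (cmod (P $$ (i, k)))\<^sup>2)"
    using \<open>i0 < d\<close> by (intro member_le_sum[where f = "\<lambda>i. \<Sum>k<d. (cmod (P $$ (i, k)))\<^sup>2"])
      (auto intro: sum_nonneg)
  also have "\<dots> = Re (tr P)"
    using tr_hermitian_square[OF assms(1)] assms(2) by simp
  finally show ?thesis .
qed

lemma part_fn_pos:
  assumes "spectral_decomp d H m E P" "0 < m"
  shows "0 < part_fn d m E P \<beta>"
proof -
  note P = spectral_decompD[OF assms(1)]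
  have "part_fn d m E P \<beta> = (\<Sum>l<m. exp (- \<beta> * E l) * Re (tr (P l)))"
    using tr_mult_mat_fun[OF assms(1) one_carrier_mat, of "\<lambda>x. exp (- \<beta> * x)"]
    by (simp add: part_fn_def carrier_matD[OF P(1)])
  also have "\<dots> > 0"
    using assms(2) by (intro sum_pos) (auto intro!: mult_pos_pos tr_projector_pos P(2,3) simp: P(4))
  finally show ?thesis .
qed

lemma gibbs_carrier: "gibbs d m E P \<beta> \<in> carrier_mat d d"
  by (simp add: gibbs_def)

lemma gibbs_eq_mat_fun:
  assumes "spectral_decomp d H m E P"
  shows "gibbs d m E P \<beta> = mat_fun d m E P (\<lambda>x. exp (- \<beta> * x) / part_fn d m E P \<beta>)"
  by (intro eq_matI)
    (auto simp: gibbs_def mat_fun_def sum_distrib_left carrier_matD[OF spectral_decompD(1)[OF assms]]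
      intro!: sum.cong)

lemma gibbs_inverse:
  assumes "spectral_decomp d H m E P"
  shows "mat_inv (gibbs d m E P \<beta>) = mat_fun d m E P (\<lambda>x. part_fn d m E P \<beta> * exp (\<beta> * x))"
    and "mat_inv (gibbs d m E P \<beta>) * gibbs d m E P \<beta> = 1\<^sub>m d"
proof -
  have weights_inverse: "part_fn d m E P \<beta> * exp (\<beta> * E l) * (exp (- \<beta> * E l) / part_fn d m E P \<beta>) = 1"
    if "l < m" for l
    using part_fn_pos[OF assms, of \<beta>] that by (simp add: exp_minus field_simps)
  then show inv: "mat_inv (gibbs d m E P \<beta>) = mat_fun d m E P (\<lambda>x. part_fn d m E P \<beta> * exp (\<beta> * x))"
    unfolding gibbs_eq_mat_fun[OF assms] by (intro mat_inv_mat_fun[OF assms]) (simp add: mult.commute)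
  show "mat_inv (gibbs d m E P \<beta>) * gibbs d m E P \<beta> = 1\<^sub>m d"
    unfolding inv unfolding gibbs_eq_mat_fun[OF assms] mat_fun_mult[OF assms]
    by (rule mat_fun_eq_one[OF assms]) (rule weights_inverse)
qed

lemma epm_avg_product:
  assumes "spectral_decomp d Hi mi Ei Qi" "spectral_decomp d Hf mf Ef Qf"
    and "\<rho> \<in> carrier_mat d d" "\<Phi> \<rho> \<in> carrier_mat d d"
    and "\<And>l k. l < mi \<Longrightarrow> k < mf \<Longrightarrow> g (Ef k - Ei l) = complex_of_real (u (Ei l) * v (Ef k))"
  shows "epm_avg mi Ei Qi mf Ef Qf \<Phi> \<rho> g
       = tr (mat_fun d mi Ei Qi u * \<rho>) * tr (mat_fun d mf Ef Qf v * \<Phi> \<rho>)"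
proof -
  have "epm_avg mi Ei Qi mf Ef Qf \<Phi> \<rho> g
      = (\<Sum>l<mi. complex_of_real (u (Ei l)) * tr (\<rho> * Qi l))
        * (\<Sum>k<mf. complex_of_real (v (Ef k)) * tr (\<Phi> \<rho> * Qf k))"
    unfolding epm_avg_def sum_product using assms(5) by (intro sum.cong refl) (simp add: ac_simps)
  also have "\<dots> = tr (\<rho> * mat_fun d mi Ei Qi u) * tr (\<Phi> \<rho> * mat_fun d mf Ef Qf v)"
    by (simp add: tr_mult_mat_fun[OF assms(1,3)] tr_mult_mat_fun[OF assms(2,4)])
  finally show ?thesis
    by (simp add: tr_mult_commute[OF assms(3) mat_fun_carrier] tr_mult_commute[OF assms(4) mat_fun_carrier])
qed

lemma exp_free_energy_split:
  fixes \<beta> Zi Zf :: real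
  assumes "\<beta> \<noteq> 0" "0 < Zi" "0 < Zf"
  shows "exp (- \<beta> * (F - E - (- (1 / \<beta>) * ln (Zf / Zi)))) = Zi * exp (\<beta> * E) * (exp (- \<beta> * F) / Zf)"
proof -
  have "- \<beta> * (F - E - (- (1 / \<beta>) * ln (Zf / Zi))) = \<beta> * E + - \<beta> * F - ln (Zf / Zi)"
    using assms(1) by (simp add: field_simps)
  then have "exp (- \<beta> * (F - E - (- (1 / \<beta>) * ln (Zf / Zi)))) = exp (\<beta> * E) * exp (- \<beta> * F) / (Zf / Zi)"
    using assms(2,3) by (simp only: exp_diff exp_add exp_ln divide_pos_pos)
  then show ?thesis
    using assms(2,3) by (simp add: field_simps)
qed

lemma epm_avg_exp_free_energy:
  assumes "spectral_decomp d Hi mi Ei Qi" "spectral_decomp d Hf mf Ef Qf" "\<beta> \<noteq> 0"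
    and "\<rho> \<in> carrier_mat d d" "\<Phi> \<rho> \<in> carrier_mat d d"
  shows "epm_avg mi Ei Qi mf Ef Qf \<Phi> \<rho>
           (\<lambda>\<Delta>E. complex_of_real (exp (- \<beta> * (\<Delta>E -
              (- (1 / \<beta>) * ln (part_fn d mf Ef Qf \<beta> / part_fn d mi Ei Qi \<beta>))))))
       = tr (mat_inv (gibbs d mi Ei Qi \<beta>) * \<rho>) * tr (gibbs d mf Ef Qf \<beta> * \<Phi> \<rho>)"
  unfolding gibbs_inverse(1)[OF assms(1)] gibbs_eq_mat_fun[OF assms(2)]
proof (rule epm_avg_product[where \<Phi> = \<Phi>, OF assms(1,2,4,5)])
  fix l k assume "l < mi" "k < mf"
  then have "0 < part_fn d mi Ei Qi \<beta>" "0 < part_fn d mf Ef Qf \<beta>"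
    using part_fn_pos assms(1,2) by auto
  then show "complex_of_real (exp (- \<beta> * (Ef k - Ei l -
              (- (1 / \<beta>) * ln (part_fn d mf Ef Qf \<beta> / part_fn d mi Ei Qi \<beta>)))))
      = complex_of_real (part_fn d mi Ei Qi \<beta> * exp (\<beta> * Ei l)
                         * (exp (- \<beta> * Ef k) / part_fn d mf Ef Qf \<beta>))"
    by (simp only: exp_free_energy_split[OF assms(3)])
qed

theorem mainTheorem3:
  fixes d mi mf :: nat and Ei Ef :: "nat \<Rightarrow> real" and Qi Qf :: "nat \<Rightarrow> complex mat"
    and Hi Hf U \<rho> \<tau> \<tau>d \<tau>c :: "complex mat" and \<Phi> :: "complex mat \<Rightarrow> complex mat"
    and \<beta> a c :: real
  assumes "spectral_decomp d Hi mi Ei Qi"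
    and "spectral_decomp d Hf mf Ef Qf"
    and "cptp d \<Phi>"
    and "\<beta> > 0"
    and "unitary d U" and "diag_in U Hi"
    and "density d \<rho>"
    and "a = athermality_weight d (gibbs d mi Ei Qi \<beta>) \<rho>"
    and "density d \<tau>" and "\<rho> = (1 - a) \<cdot>\<^sub>r gibbs d mi Ei Qi \<beta> + a \<cdot>\<^sub>r \<tau>"
    and "c = coherence_weight d U \<tau>"
    and "density d \<tau>d" and "diag_in U \<tau>d" and "density d \<tau>c"
    and "\<tau> = (1 - c) \<cdot>\<^sub>r \<tau>d + c \<cdot>\<^sub>r \<tau>c"
    and "\<rho> = (1 - a) \<cdot>\<^sub>r gibbs d mi Ei Qi \<beta> + (a * (1 - c)) \<cdot>\<^sub>r \<tau>d + (a * c) \<cdot>\<^sub>r \<tau>c"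
  shows "epm_avg mi Ei Qi mf Ef Qf \<Phi> \<rho>
           (\<lambda>\<Delta>E. complex_of_real (exp (- \<beta> * (\<Delta>E -
              (- (1 / \<beta>) * ln (part_fn d mf Ef Qf \<beta> / part_fn d mi Ei Qi \<beta>))))))
       = (complex_of_real ((1 - a) * real d)
            + complex_of_real (a * (1 - c)) * tr (mat_inv (gibbs d mi Ei Qi \<beta>) * \<tau>d)
            + complex_of_real (a * c) * tr (mat_inv (gibbs d mi Ei Qi \<beta>) * \<tau>c))
       * (complex_of_real (1 - a) * tr (gibbs d mf Ef Qf \<beta> * \<Phi> (gibbs d mi Ei Qi \<beta>))
            + complex_of_real (a * (1 - c)) * tr (gibbs d mf Ef Qf \<beta> * \<Phi> \<tau>d)
            + complex_of_real (a * c) * tr (gibbs d mf Ef Qf \<beta> * \<Phi> \<tau>c))"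
proof -
  let ?\<gamma>i = "gibbs d mi Ei Qi \<beta>" and ?\<gamma>f = "gibbs d mf Ef Qf \<beta>"
  have \<rho>: "\<rho> \<in> carrier_mat d d" and \<tau>d: "\<tau>d \<in> carrier_mat d d" and \<tau>c: "\<tau>c \<in> carrier_mat d d"
    using assms(7,12,14) by (simp_all add: density_carrier)
  have \<gamma>i: "?\<gamma>i \<in> carrier_mat d d" and \<gamma>f: "?\<gamma>f \<in> carrier_mat d d"
    and \<gamma>i_inv: "mat_inv ?\<gamma>i \<in> carrier_mat d d"
    by (simp_all add: gibbs_carrier gibbs_inverse(1)[OF assms(1)])
  have "epm_avg mi Ei Qi mf Ef Qf \<Phi> \<rho>
           (\<lambda>\<Delta>E. complex_of_real (exp (- \<beta> * (\<Delta>E -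
              (- (1 / \<beta>) * ln (part_fn d mf Ef Qf \<beta> / part_fn d mi Ei Qi \<beta>))))))
      = tr (mat_inv ?\<gamma>i * \<rho>) * tr (?\<gamma>f * \<Phi> \<rho>)"
    using assms(1,2,4) \<rho> cptp_carrier[OF assms(3) \<rho>] by (intro epm_avg_exp_free_energy) auto
  also have "tr (mat_inv ?\<gamma>i * \<rho>) = complex_of_real ((1 - a) * real d)
            + complex_of_real (a * (1 - c)) * tr (mat_inv ?\<gamma>i * \<tau>d)
            + complex_of_real (a * c) * tr (mat_inv ?\<gamma>i * \<tau>c)"
    unfolding assms(16) using \<gamma>i_inv \<gamma>i \<tau>d \<tau>c
    by (simp add: tr_mult_add_right tr_mult_rsmult_right gibbs_inverse(2)[OF assms(1)])
  also have "tr (?\<gamma>f * \<Phi> \<rho>) = complex_of_real (1 - a) * tr (?\<gamma>f * \<Phi> ?\<gamma>i)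
            + complex_of_real (a * (1 - c)) * tr (?\<gamma>f * \<Phi> \<tau>d)
            + complex_of_real (a * c) * tr (?\<gamma>f * \<Phi> \<tau>c)"
    unfolding assms(16) using assms(3) \<gamma>f \<gamma>i \<tau>d \<tau>c
    by (simp add: cptp_add cptp_rsmult cptp_carrier tr_mult_add_right tr_mult_rsmult_right)
  finally show ?thesis .
qed

end
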